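(* Let $n\ge \max\{m,p\}$, $A\in\mathbb{R}^{n\times n}$ symmetric positive definite, $B\in\mathbb{R}^{m\times n}$ of full row rank, $D\in\mathbb{R}^{m\times m}$ symmetric positive semidefinite, and $\widehat A\in\mathbb{R}^{n\times n}$, $\widehat S\in\mathbb{R}^{m\times m}$ symmetric positive definite. Set $\overline A=\widehat A^{-1/2}A\widehat A^{-1/2}$, $\overline D=\widehat S^{-1/2}D\widehat S^{-1/2}$, $R=\widehat S^{-1/2}B\widehat A^{-1/2}$, $\widetilde S=D+B\widehat A^{-1}B^T$, and define $\gamma^A_{\min/\max}=\lambda_{\min/\max}(\widehat A^{-1}A)$, $\gamma^S_{\max}=\lambda_{\max}(\widehat S^{-1}\widetilde S)$, $\gamma^D_{\max}=\lambda_{\max}(\widehat S^{-1}D)$, $\gamma^R_{\min}=\lambda_{\min}(RR^T)$. Assume $1\in[\gamma^A_{\min},\gamma^A_{\max}]$. Let $\zeta\in\mathbb{R}$ satisfy either $$0<\zeta<\min\left\{\gamma^A_{\min},\ \frac{\gamma^R_{\min}}{\gamma^A_{\max}+\gamma^R_{\min}+\gamma^D_{\max}}\right\}\quad\text{or}\quad \zeta\ge\gamma^A_{\max}+\gamma^S_{\max}.$$ Then all eigenvalues of the symmetric matrix $$Z(\zeta)=(1-\zeta)R(\zeta I-\overline A)^{-1}R^T-\overline D+\zeta I\in\mathbb{R}^{m\times m}$$ are either all positive or all negative.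
   Context: $\lambda_{\min}$, $\lambda_{\max}$ denote the smallest and largest eigenvalues (all matrices involved have real spectra). The assumption $1\in[\gamma^A_{\min},\gamma^A_{\max}]$ is a standing assumption of the paper's analysis. *)

theory Defs
  imports "HOL-Analysis.Analysis"
begin

definition sym_mat :: "real^'n^'n \<Rightarrow> bool" where
  "sym_mat M \<longleftrightarrow> transpose M = M"

definition pos_def_mat :: "real^'n^'n \<Rightarrow> bool" where
  "pos_def_mat M \<longleftrightarrow> sym_mat M \<and> (\<forall>x. x \<noteq> 0 \<longrightarrow> x \<bullet> (M *v x) > 0)"

definition pos_semidef_mat :: "real^'n^'n \<Rightarrow> bool" where
  "pos_semidef_mat M \<longleftrightarrow> sym_mat M \<and> (\<forall>x. x \<bullet> (M *v x) \<ge> 0)"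

definition mat_eigenvalue :: "real^'n^'n \<Rightarrow> real \<Rightarrow> bool" where
  "mat_eigenvalue M c \<longleftrightarrow> (\<exists>v. v \<noteq> 0 \<and> M *v v = c *\<^sub>R v)"

definition lambda_min :: "real^'n^'n \<Rightarrow> real" where
  "lambda_min M = Min {c. mat_eigenvalue M c}"

definition lambda_max :: "real^'n^'n \<Rightarrow> real" where
  "lambda_max M = Max {c. mat_eigenvalue M c}"

definition spd_sqrt :: "real^'n^'n \<Rightarrow> real^'n^'n" where
  "spd_sqrt M = (THE X. pos_def_mat X \<and> X ** X = M)"

definition inv_sqrt :: "real^'n^'n \<Rightarrow> real^'n^'n" where
  "inv_sqrt M = matrix_inv (spd_sqrt M)"

end

theory Submission
  imports Defs
begin

(* Conjugating by Ahat^(-1/2) and Shat^(-1/2) turns the gammas into extreme eigenvalues of the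
   symmetric matrices Abar, R R^T, Dbar and Dbar + R R^T (similar matrices have the same
   eigenvalues), and the quadratic form of Z(zeta) is
     (1 - zeta) <(zeta I - Abar)^(-1) R^T z, R^T z> - <Dbar z, z> + zeta |z|^2.
   For small zeta the spectrum of zeta I - Abar lies in [zeta - gmax, zeta - gmin], below 0, so the
   first term is at most -(1 - zeta) gR |z|^2 / (gmax - zeta), which beats zeta |z|^2: Z is negative
   definite.  For large zeta, zeta I - Abar >= (zeta - gmax) I > 0, so the first two terms are at
   least -k <(Dbar + R R^T) z, z> >= -k gS |z|^2 with k = (zeta - 1) / (zeta - gmax) >= 1, and
   k gS < zeta: Z is positive definite.  The spectral facts needed (Rayleigh bounds, bounds for
   inverses, the SPD square root) all come from an orthonormal eigenbasis, built by maximising the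
   quadratic form on the unit sphere of the orthogonal complement of the eigenvectors found so far. *)

abbreviation quad_form :: "real^'n^'n \<Rightarrow> real^'n \<Rightarrow> real" where
  "quad_form M x \<equiv> x \<bullet> (M *v x)"

lemma inner_matrix_vector_transpose: "x \<bullet> ((M::real^'n^'m) *v y) = (transpose M *v x) \<bullet> y"
  by (simp add: dot_lmul_matrix)

lemma sym_mat_iff_inner: "sym_mat M \<longleftrightarrow> (\<forall>x y. x \<bullet> (M *v y) = (M *v x) \<bullet> y)"
proof
  assume "sym_mat M"
  then have "transpose M = M" unfolding sym_mat_def .
  then show "\<forall>x y. x \<bullet> (M *v y) = (M *v x) \<bullet> y"
    using inner_matrix_vector_transpose[of _ M] by metis
next
  assume sym: "\<forall>x y. x \<bullet> (M *v y) = (M *v x) \<bullet> y"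
  have "transpose M *v x = M *v x" for x
  proof -
    have "(transpose M *v x - M *v x) \<bullet> y = 0" for y
      using sym inner_matrix_vector_transpose[of x M y] by (simp only: inner_diff_left)
    from this[of "transpose M *v x - M *v x"] show ?thesis by simp
  qed
  then show "sym_mat M" unfolding sym_mat_def by (simp add: matrix_eq)
qed

lemma sym_mat_inner: "sym_mat M \<Longrightarrow> x \<bullet> (M *v y) = (M *v x) \<bullet> y"
  unfolding sym_mat_iff_inner by blast

lemma scaleR_id_diff_matrix_vector: "(c *\<^sub>R mat 1 - (A::real^'n^'n)) *v x = c *\<^sub>R x - A *v x"
  by (simp add: matrix_vector_mult_diff_rdistrib scaleR_matrix_vector_assoc[symmetric])

lemma sym_mat_scaleR_id_diff: "sym_mat (A::real^'n^'n) \<Longrightarrow> sym_mat (c *\<^sub>R mat 1 - A)"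
  by (simp add: sym_mat_iff_inner scaleR_id_diff_matrix_vector inner_diff_left inner_diff_right)

lemma sym_mat_add: "sym_mat A \<Longrightarrow> sym_mat B \<Longrightarrow> sym_mat (A + B)"
  by (simp add: sym_mat_iff_inner matrix_vector_mult_add_rdistrib inner_add_left inner_add_right)

lemma matrix_add_rdistrib: "((A::real^'n^'m) + B) ** (C::real^'p^'n) = A ** C + B ** C"
  by (simp add: matrix_eq matrix_vector_mul_assoc[symmetric] matrix_vector_mult_add_rdistrib)

lemma sym_mat_mult_transpose: "sym_mat ((R::real^'n^'m) ** transpose R)"
  unfolding sym_mat_def by (simp add: matrix_transpose_mul)

lemma sym_mat_congruence: "sym_mat P \<Longrightarrow> sym_mat M \<Longrightarrow> sym_mat (P ** M ** P)"
  unfolding sym_mat_def by (simp add: matrix_transpose_mul matrix_mul_assoc)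

lemma quad_form_congruence: "sym_mat P \<Longrightarrow> quad_form (P ** M ** P) x = quad_form M (P *v x)"
  by (simp add: matrix_vector_mul_assoc[symmetric] sym_mat_inner)

lemma pos_semidef_mat_congruence:
  "sym_mat P \<Longrightarrow> pos_semidef_mat M \<Longrightarrow> pos_semidef_mat (P ** M ** P)"
  by (simp add: pos_semidef_mat_def sym_mat_congruence quad_form_congruence)

lemma quad_form_mult_transpose:
  "quad_form ((R::real^'n^'m) ** transpose R) z = (transpose R *v z) \<bullet> (transpose R *v z)"
  by (simp only: matrix_vector_mul_assoc[symmetric] inner_matrix_vector_transpose)

lemma quad_form_scaleR: "quad_form M (c *\<^sub>R x) = c\<^sup>2 * quad_form M x"
  by (simp add: matrix_vector_mult_scaleR power2_eq_square)

lemma quad_form_add: "quad_form (A + B) x = quad_form A x + quad_form B x"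
  by (simp add: matrix_vector_mult_add_rdistrib inner_add_right)

lemma quad_form_add_scaleR:
  assumes "sym_mat M"
  shows "quad_form M (u + t *\<^sub>R w) = quad_form M u + 2 * t * (w \<bullet> (M *v u)) + t\<^sup>2 * quad_form M w"
  using sym_mat_inner[OF assms, of u w]
  by (simp add: matrix_vector_right_distrib matrix_vector_mult_scaleR inner_add_left
      inner_add_right inner_commute power2_eq_square algebra_simps)

lemma pos_semidef_mat_mult_transpose: "pos_semidef_mat ((R::real^'n^'m) ** transpose R)"
  by (simp add: pos_semidef_mat_def sym_mat_mult_transpose quad_form_mult_transpose)

lemma pos_def_mat_add_mult_transpose:
  fixes D :: "real^'m^'m" and R :: "real^'n^'m"
  assumes "pos_semidef_mat D" and "inj ((*v) (transpose R))"
  shows "pos_def_mat (D + R ** transpose R)"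
  unfolding pos_def_mat_def
proof (intro conjI allI impI)
  show "sym_mat (D + R ** transpose R)"
    using assms(1) sym_mat_add sym_mat_mult_transpose unfolding pos_semidef_mat_def by blast
  fix z :: "real^'m" assume "z \<noteq> 0"
  then have "transpose R *v z \<noteq> 0"
    using injD[OF assms(2), of z 0] by auto
  then show "0 < quad_form (D + R ** transpose R) z"
    using assms(1) unfolding pos_semidef_mat_def quad_form_add quad_form_mult_transpose
    by (simp add: add_nonneg_pos)
qed

lemma
  fixes P :: "real^'n^'n"
  assumes "invertible P"
  shows matrix_inv_right: "P ** matrix_inv P = mat 1"
    and matrix_inv_left: "matrix_inv P ** P = mat 1"
proof -
  have "\<exists>Q. P ** Q = mat 1 \<and> Q ** P = mat 1" using assms unfolding invertible_def .
  then have "P ** matrix_inv P = mat 1 \<and> matrix_inv P ** P = mat 1"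
    unfolding matrix_inv_def by (rule someI_ex)
  then show "P ** matrix_inv P = mat 1" "matrix_inv P ** P = mat 1" by auto
qed

lemma matrix_inv_unique:
  fixes P Q :: "real^'n^'n"
  assumes "Q ** P = mat 1"
  shows "matrix_inv P = Q"
proof -
  have "invertible P" using assms invertible_left_inverse by blast
  then have "Q = Q ** (P ** matrix_inv P)" by (simp add: matrix_inv_right)
  then show ?thesis by (simp add: matrix_mul_assoc assms)
qed

lemma invertible_matrix_inv: "invertible (P::real^'n^'n) \<Longrightarrow> invertible (matrix_inv P)"
  using invertible_left_inverse matrix_inv_right by blast

lemma matrix_inv_mult:
  fixes P Q :: "real^'n^'n"
  assumes "invertible P" "invertible Q"
  shows "matrix_inv (P ** Q) = matrix_inv Q ** matrix_inv P"
proof (rule matrix_inv_unique)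
  have "matrix_inv Q ** matrix_inv P ** (P ** Q) = matrix_inv Q ** (matrix_inv P ** P) ** Q"
    by (simp only: matrix_mul_assoc)
  then show "matrix_inv Q ** matrix_inv P ** (P ** Q) = mat 1"
    by (simp add: assms matrix_inv_left)
qed

lemma matrix_inv_transpose:
  "invertible (P::real^'n^'n) \<Longrightarrow> matrix_inv (transpose P) = transpose (matrix_inv P)"
proof (rule matrix_inv_unique)
  assume "invertible P"
  then have "transpose (P ** matrix_inv P) = mat 1" by (simp add: matrix_inv_right)
  then show "transpose (matrix_inv P) ** transpose P = mat 1" by (simp add: matrix_transpose_mul)
qed

lemma sym_mat_matrix_inv: "invertible (P::real^'n^'n) \<Longrightarrow> sym_mat P \<Longrightarrow> sym_mat (matrix_inv P)"
  unfolding sym_mat_def by (metis matrix_inv_transpose)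

lemma pos_def_mat_invertible: "pos_def_mat M \<Longrightarrow> invertible M"
proof -
  assume pd: "pos_def_mat M"
  have "inj ((*v) M)"
  proof (rule injI)
    fix x y assume "M *v x = M *v y"
    then have "(x - y) \<bullet> (M *v (x - y)) = 0" by (simp add: matrix_vector_mult_diff_distrib)
    then show "x = y" using pd unfolding pos_def_mat_def by (metis less_irrefl eq_iff_diff_eq_0)
  qed
  then show ?thesis
    using invertible_left_inverse matrix_left_invertible_injective by blast
qed

section \<open>Orthonormal eigenbases\<close>

locale orthonormal_basis =
  fixes S :: "(real^'n) set"
  assumes pairwise_orthogonal: "pairwise orthogonal S"
    and norm_eq_1: "\<And>u. u \<in> S \<Longrightarrow> norm u = 1"
    and span_eq_UNIV: "span S = UNIV"
begin

lemma finite_basis: "finite S"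
proof -
  have "0 \<notin> S" using norm_eq_1 by fastforce
  then show ?thesis
    using pairwise_orthogonal independent_imp_finite pairwise_orthogonal_independent by blast
qed

lemma basis_nonempty: "S \<noteq> {}"
proof
  assume "S = {}"
  then have "(UNIV :: (real^'n) set) = {0}" using span_eq_UNIV by simp
  then have "axis undefined (1::real) = (0::real^'n)" by blast
  then show False by (simp add: axis_eq_0_iff)
qed

lemma inner_basis: "u \<in> S \<Longrightarrow> v \<in> S \<Longrightarrow> u \<bullet> v = (if u = v then 1 else 0)"
  using pairwise_orthogonal norm_eq_1
  by (auto simp: pairwise_def orthogonal_def dot_square_norm)

definition spectral_map :: "(real^'n \<Rightarrow> real) \<Rightarrow> real^'n \<Rightarrow> real^'n" where
  "spectral_map f x = (\<Sum>u\<in>S. (f u * (u \<bullet> x)) *\<^sub>R u)"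

lemma linear_spectral_map: "linear (spectral_map f)"
  by (rule linearI)
    (simp_all add: spectral_map_def inner_add_right distrib_left scaleR_add_left
      sum.distrib scaleR_sum_right mult_ac)

lemma inner_spectral_map: "u \<in> S \<Longrightarrow> u \<bullet> spectral_map f x = f u * (u \<bullet> x)"
  by (simp add: spectral_map_def inner_sum_right inner_basis finite_basis if_distrib cong: if_cong)

lemma spectral_map_1: "spectral_map (\<lambda>_. 1) x = x"
proof -
  define y where "y = x - spectral_map (\<lambda>_. 1) x"
  have "orthogonal y u" if "u \<in> S" for u
  proof -
    have "u \<bullet> y = 0"
      by (simp add: y_def inner_diff_right inner_spectral_map[OF that])
    then show ?thesis by (simp add: orthogonal_def inner_commute)
  qed
  then have "orthogonal y y"
    using orthogonal_to_span span_eq_UNIV by blast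
  then show ?thesis by (simp add: y_def orthogonal_def)
qed

lemma spectral_map_spectral_map:
  "spectral_map f (spectral_map g x) = spectral_map (\<lambda>u. f u * g u) x"
  unfolding spectral_map_def[of f] spectral_map_def[of "\<lambda>u. f u * g u"]
  by (rule sum.cong) (simp_all add: inner_spectral_map)

lemma inner_spectral_map_self: "x \<bullet> spectral_map f x = (\<Sum>u\<in>S. f u * (u \<bullet> x)\<^sup>2)"
  by (simp add: spectral_map_def inner_sum_right inner_commute power2_eq_square mult_ac)

lemma sum_inner_square: "(\<Sum>u\<in>S. (u \<bullet> x)\<^sup>2) = x \<bullet> x"
  using inner_spectral_map_self[of x "\<lambda>_. 1"] by (simp add: spectral_map_1)

lemma exists_inner_nonzero:
  assumes "x \<noteq> 0"
  shows "\<exists>u\<in>S. u \<bullet> x \<noteq> 0"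
proof (rule ccontr)
  assume "\<not> ?thesis"
  then have "spectral_map (\<lambda>_. 1) x = 0" by (simp add: spectral_map_def)
  then show False using spectral_map_1[of x] assms by simp
qed

lemma spectral_map_cong: "(\<And>u. u \<in> S \<Longrightarrow> f u = g u) \<Longrightarrow> spectral_map f x = spectral_map g x"
  by (simp add: spectral_map_def)

lemma matrix_spectral_map: "matrix (spectral_map f) *v x = spectral_map f x"
  using matrix_vector_mul(2)[OF linear_spectral_map] by metis

lemma sym_mat_matrix_spectral_map: "sym_mat (matrix (spectral_map f))"
  unfolding sym_mat_iff_inner matrix_spectral_map spectral_map_def
  by (simp add: inner_sum_left inner_sum_right inner_commute mult_ac)

lemma pos_def_mat_matrix_spectral_map:
  assumes "\<And>u. u \<in> S \<Longrightarrow> 0 < f u"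
  shows "pos_def_mat (matrix (spectral_map f))"
  unfolding pos_def_mat_def
proof (intro conjI allI impI sym_mat_matrix_spectral_map)
  fix x :: "real^'n" assume "x \<noteq> 0"
  then obtain v where "v \<in> S" "v \<bullet> x \<noteq> 0" using exists_inner_nonzero by blast
  then have "0 < (\<Sum>u\<in>S. f u * (u \<bullet> x)\<^sup>2)"
    using assms by (intro sum_pos2[OF finite_basis, of v]) (auto simp: zero_less_mult_iff less_imp_le)
  then show "0 < x \<bullet> (matrix (spectral_map f) *v x)"
    by (simp add: matrix_spectral_map inner_spectral_map_self)
qed

end

locale orthonormal_eigenbasis = orthonormal_basis S for S :: "(real^'n) set" +
  fixes M :: "real^'n^'n" and \<mu> :: "real^'n \<Rightarrow> real"
  assumes eigenvector: "\<And>u. u \<in> S \<Longrightarrow> M *v u = \<mu> u *\<^sub>R u"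
begin

lemma matrix_vector_eq_spectral_map: "M *v x = spectral_map \<mu> x"
proof -
  have "M *v x = M *v (\<Sum>u\<in>S. (u \<bullet> x) *\<^sub>R u)"
    using spectral_map_1[of x] by (simp add: spectral_map_def)
  also have "\<dots> = (\<Sum>u\<in>S. (u \<bullet> x) *\<^sub>R (M *v u))"
    by (simp add: linear_sum[OF matrix_vector_mul_linear] matrix_vector_mult_scaleR o_def)
  finally show ?thesis by (simp add: spectral_map_def eigenvector mult.commute cong: sum.cong)
qed

lemma mat_eigenvalue_iff: "mat_eigenvalue M c \<longleftrightarrow> c \<in> \<mu> ` S"
proof
  assume "mat_eigenvalue M c"
  then obtain v where v: "v \<noteq> 0" "M *v v = c *\<^sub>R v" unfolding mat_eigenvalue_def by blast
  obtain u where u: "u \<in> S" "u \<bullet> v \<noteq> 0" using exists_inner_nonzero v(1) by blast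
  have "\<mu> u * (u \<bullet> v) = u \<bullet> (M *v v)"
    by (simp add: matrix_vector_eq_spectral_map inner_spectral_map[OF u(1)])
  also have "\<dots> = c * (u \<bullet> v)" using v(2) by simp
  finally have "\<mu> u = c" using u(2) by simp
  then show "c \<in> \<mu> ` S" using u(1) by blast
next
  assume "c \<in> \<mu> ` S"
  then obtain u where "u \<in> S" "c = \<mu> u" by blast
  then show "mat_eigenvalue M c"
    unfolding mat_eigenvalue_def using eigenvector norm_eq_1 by (metis norm_zero zero_neq_one)
qed

lemma eigenvalues_eq: "{c. mat_eigenvalue M c} = \<mu> ` S"
  using mat_eigenvalue_iff by blast

lemma quad_form_eq: "quad_form M x = (\<Sum>u\<in>S. \<mu> u * (u \<bullet> x)\<^sup>2)"
  by (simp add: matrix_vector_eq_spectral_map inner_spectral_map_self)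

lemma lambda_min_eq: "lambda_min M = Min (\<mu> ` S)"
  by (simp add: lambda_min_def eigenvalues_eq)

lemma lambda_max_eq: "lambda_max M = Max (\<mu> ` S)"
  by (simp add: lambda_max_def eigenvalues_eq)

lemma lambda_min_le_eigenvalue: "mat_eigenvalue M c \<Longrightarrow> lambda_min M \<le> c"
  by (simp add: lambda_min_eq mat_eigenvalue_iff finite_basis)

lemma eigenvalue_le_lambda_max: "mat_eigenvalue M c \<Longrightarrow> c \<le> lambda_max M"
  by (simp add: lambda_max_eq mat_eigenvalue_iff finite_basis)

lemma mat_eigenvalue_lambda_min: "mat_eigenvalue M (lambda_min M)"
  by (simp add: lambda_min_eq mat_eigenvalue_iff finite_basis basis_nonempty)

lemma mat_eigenvalue_lambda_max: "mat_eigenvalue M (lambda_max M)"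
  by (simp add: lambda_max_eq mat_eigenvalue_iff finite_basis basis_nonempty)

lemma lambda_min_le_quad_form: "lambda_min M * (x \<bullet> x) \<le> quad_form M x"
proof -
  have "lambda_min M * (x \<bullet> x) = (\<Sum>u\<in>S. lambda_min M * (u \<bullet> x)\<^sup>2)"
    by (simp only: sum_distrib_left[symmetric] sum_inner_square)
  also have "\<dots> \<le> (\<Sum>u\<in>S. \<mu> u * (u \<bullet> x)\<^sup>2)"
    by (intro sum_mono mult_right_mono) (simp_all add: lambda_min_eq finite_basis)
  finally show ?thesis by (simp add: quad_form_eq)
qed

lemma quad_form_le_lambda_max: "quad_form M x \<le> lambda_max M * (x \<bullet> x)"
proof -
  have "quad_form M x = (\<Sum>u\<in>S. \<mu> u * (u \<bullet> x)\<^sup>2)" by (rule quad_form_eq)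
  also have "\<dots> \<le> (\<Sum>u\<in>S. lambda_max M * (u \<bullet> x)\<^sup>2)"
    by (intro sum_mono mult_right_mono) (simp_all add: lambda_max_eq finite_basis)
  also have "\<dots> = lambda_max M * (x \<bullet> x)"
    by (simp only: sum_distrib_left[symmetric] sum_inner_square)
  finally show ?thesis .
qed

lemma matrix_inv_eq_spectral_map:
  assumes "\<And>u. u \<in> S \<Longrightarrow> \<mu> u \<noteq> 0"
  shows "matrix_inv M *v y = spectral_map (\<lambda>u. inverse (\<mu> u)) y"
proof -
  have "spectral_map (\<lambda>u. inverse (\<mu> u) * \<mu> u) x = spectral_map (\<lambda>_. 1) x" for x
    by (rule spectral_map_cong) (simp add: assms)
  then have "matrix (spectral_map (\<lambda>u. inverse (\<mu> u))) ** M = mat 1"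
    unfolding matrix_eq
    by (simp add: matrix_vector_mul_assoc[symmetric] matrix_spectral_map
        matrix_vector_eq_spectral_map spectral_map_spectral_map spectral_map_1)
  then show ?thesis by (simp add: matrix_inv_unique matrix_spectral_map)
qed

lemma quad_form_matrix_inv_le:
  assumes "\<And>u. u \<in> S \<Longrightarrow> \<mu> u \<noteq> 0" and "\<And>u. u \<in> S \<Longrightarrow> inverse (\<mu> u) \<le> b"
  shows "quad_form (matrix_inv M) y \<le> b * (y \<bullet> y)"
proof -
  have "quad_form (matrix_inv M) y = (\<Sum>u\<in>S. inverse (\<mu> u) * (u \<bullet> y)\<^sup>2)"
    by (simp add: matrix_inv_eq_spectral_map assms(1) inner_spectral_map_self)
  also have "\<dots> \<le> (\<Sum>u\<in>S. b * (u \<bullet> y)\<^sup>2)"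
    by (intro sum_mono mult_right_mono) (simp_all add: assms(2))
  also have "\<dots> = b * (y \<bullet> y)"
    by (simp only: sum_distrib_left[symmetric] sum_inner_square)
  finally show ?thesis .
qed

end

section \<open>The spectral theorem\<close>

lemma linear_coeff_eq_0_if_quadratic_nonneg:
  fixes a b :: real
  assumes "\<And>t. 0 \<le> 2 * t * a + t\<^sup>2 * b"
  shows "a = 0"
proof (rule ccontr)
  assume "a \<noteq> 0"
  define s where "s = \<bar>b\<bar> + 1"
  have s: "s > 0" "b - 2 * s < 0" unfolding s_def by auto
  have "2 * (- a / s) * a + (- a / s)\<^sup>2 * b = a\<^sup>2 / s\<^sup>2 * (b - 2 * s)"
    using s(1) by (simp add: field_simps power2_eq_square)
  also have "\<dots> < 0"
    using \<open>a \<noteq> 0\<close> s by (intro mult_pos_neg) simp_all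
  finally show False using assms[of "- a / s"] by simp
qed

lemma quad_form_zero_imp_kernel:
  assumes sym: "sym_mat N" and W: "subspace W" and inv: "\<And>w. w \<in> W \<Longrightarrow> N *v w \<in> W"
    and nonneg: "\<And>w. w \<in> W \<Longrightarrow> 0 \<le> quad_form N w" and u: "u \<in> W" "quad_form N u = 0"
  shows "N *v u = 0"
proof -
  have "0 \<le> 2 * t * ((N *v u) \<bullet> (N *v u)) + t\<^sup>2 * quad_form N (N *v u)" for t
  proof -
    have "u + t *\<^sub>R (N *v u) \<in> W" using W u inv by (simp add: subspace_add subspace_scale)
    then show ?thesis using nonneg quad_form_add_scaleR[OF sym] u(2) by fastforce
  qed
  then have "(N *v u) \<bullet> (N *v u) = 0" by (rule linear_coeff_eq_0_if_quadratic_nonneg)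
  then show ?thesis by simp
qed

text \<open>A maximiser u of the quadratic form on the unit sphere of W makes
  N = (u \<bullet> M u) I - M positive semidefinite on W with u a null vector of N, so N u = 0.\<close>

lemma sym_mat_invariant_subspace_eigenvector:
  fixes M :: "real^'n^'n"
  assumes sym: "sym_mat M" and W: "subspace W" and inv: "\<And>w. w \<in> W \<Longrightarrow> M *v w \<in> W"
    and nontrivial: "W \<noteq> {0}"
  obtains u c where "u \<in> W" "norm u = 1" "M *v u = c *\<^sub>R u"
proof -
  define K where "K = sphere 0 1 \<inter> W"
  have compact: "compact K" unfolding K_def by (intro compact_Int_closed compact_sphere closed_subspace W)
  obtain w0 where "w0 \<in> W" "w0 \<noteq> 0" using nontrivial W subspace_0 by blast
  then have "w0 /\<^sub>R norm w0 \<in> K" unfolding K_def using W by (simp add: subspace_scale)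
  then have nonempty: "K \<noteq> {}" by blast
  have "continuous_on K (quad_form M)" by (intro continuous_intros)
  then obtain u where u: "u \<in> K" and max: "\<And>y. y \<in> K \<Longrightarrow> quad_form M y \<le> quad_form M u"
    using continuous_attains_sup[OF compact nonempty] by blast
  define N where "N = quad_form M u *\<^sub>R mat 1 - M"
  have uW: "u \<in> W" and uu: "u \<bullet> u = 1" using u by (auto simp: K_def dot_square_norm)
  have Nv: "N *v x = quad_form M u *\<^sub>R x - M *v x" for x
    unfolding N_def by (rule scaleR_id_diff_matrix_vector)
  have "0 \<le> quad_form N w" if "w \<in> W" for w
  proof (cases "w = 0")
    case False
    then have "w /\<^sub>R norm w \<in> K" unfolding K_def using W that by (simp add: subspace_scale)
    from max[OF this] have "(inverse (norm w))\<^sup>2 * quad_form M w \<le> quad_form M u"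
      by (simp only: quad_form_scaleR)
    then have "quad_form M w \<le> quad_form M u * (norm w)\<^sup>2"
      using False by (simp add: power_inverse field_simps)
    then have "quad_form M w \<le> quad_form M u * (w \<bullet> w)"
      by (simp add: power2_norm_eq_inner)
    then show ?thesis by (simp add: Nv inner_diff_right)
  qed (simp add: Nv)
  moreover have "quad_form N u = 0" by (simp add: Nv inner_diff_right uu)
  moreover have "N *v w \<in> W" if "w \<in> W" for w
    using that inv W by (simp add: Nv subspace_diff subspace_scale)
  ultimately have "N *v u = 0"
    using quad_form_zero_imp_kernel sym_mat_scaleR_id_diff[OF sym] uW W unfolding N_def by blast
  then have "M *v u = quad_form M u *\<^sub>R u" by (simp add: Nv)
  moreover have "norm u = 1" using u by (simp add: K_def)
  ultimately show ?thesis using that uW by blast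
qed

definition orthonormal_eigenvectors :: "real^'n^'n \<Rightarrow> (real^'n) set \<Rightarrow> bool" where
  "orthonormal_eigenvectors M S \<longleftrightarrow>
    pairwise orthogonal S \<and> (\<forall>u\<in>S. norm u = 1 \<and> (\<exists>c. M *v u = c *\<^sub>R u))"

lemma orthonormal_eigenvectors_independent:
  fixes M :: "real^'n^'n"
  assumes "orthonormal_eigenvectors M S"
  shows "independent S"
proof -
  have "0 \<notin> S"
  proof
    assume "0 \<in> S"
    then have "norm (0::real^'n) = 1" using assms unfolding orthonormal_eigenvectors_def by blast
    then show False by simp
  qed
  then show ?thesis
    using assms pairwise_orthogonal_independent unfolding orthonormal_eigenvectors_def by blast
qed

text \<open>The orthogonal complement of a set of eigenvectors of a symmetric matrix is invariant,
  so it contains a further eigenvector.\<close>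

lemma orthonormal_eigenvectors_extend:
  fixes M :: "real^'n^'n"
  assumes sym: "sym_mat M" and S: "orthonormal_eigenvectors M S" and "span S \<noteq> UNIV"
  obtains u where "u \<notin> S" "orthonormal_eigenvectors M (insert u S)"
proof -
  obtain a where a: "a \<noteq> 0" "\<And>x. x \<in> span S \<Longrightarrow> a \<bullet> x = 0"
    using span_not_UNIV_orthogonal[OF assms(3)] by blast
  define W where "W = {x. \<forall>s\<in>S. s \<bullet> x = 0}"
  have W: "subspace W" unfolding W_def subspace_def by (simp add: inner_add_right)
  have "a \<in> W" unfolding W_def using a(2)[OF span_base] by (simp add: inner_commute)
  then have "W \<noteq> {0}" using a(1) by blast
  moreover have "M *v w \<in> W" if w: "w \<in> W" for w
  proof -
    have "s \<bullet> (M *v w) = 0" if s: "s \<in> S" for s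
    proof -
      obtain c where c: "M *v s = c *\<^sub>R s" using S s unfolding orthonormal_eigenvectors_def by blast
      have "s \<bullet> (M *v w) = (M *v s) \<bullet> w" by (rule sym_mat_inner[OF sym])
      also have "\<dots> = c * (s \<bullet> w)" by (simp add: c)
      also have "\<dots> = 0" using w s unfolding W_def by simp
      finally show ?thesis .
    qed
    then show ?thesis unfolding W_def by blast
  qed
  ultimately obtain u c where u: "u \<in> W" "norm u = 1" "M *v u = c *\<^sub>R u"
    using sym_mat_invariant_subspace_eigenvector[OF sym W] by blast
  have "u \<notin> S"
  proof
    assume "u \<in> S"
    then have "u \<bullet> u = 0" using u(1) unfolding W_def by blast
    then show False using u(2) by simp
  qed
  moreover have "orthonormal_eigenvectors M (insert u S)"
    using S u unfolding orthonormal_eigenvectors_def W_def pairwise_insert orthogonal_def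
    by (auto simp: inner_commute)
  ultimately show ?thesis by (rule that)
qed

text \<open>A set of orthonormal eigenvectors of maximal cardinality spans the whole space.\<close>

theorem sym_mat_spectral:
  fixes M :: "real^'n^'n"
  assumes sym: "sym_mat M"
  obtains S where "orthonormal_eigenbasis S M (quad_form M)"
proof -
  have "orthonormal_eigenvectors M {}" unfolding orthonormal_eigenvectors_def by simp
  moreover have "\<forall>S. orthonormal_eigenvectors M S \<longrightarrow> card S < DIM(real^'n) + 1"
  proof (intro allI impI)
    fix S assume "orthonormal_eigenvectors M S"
    then have "card S \<le> DIM(real^'n)"
      using orthonormal_eigenvectors_independent independent_bound by blast
    then show "card S < DIM(real^'n) + 1" by simp
  qed
  ultimately have "\<exists>S. orthonormal_eigenvectors M S
      \<and> (\<forall>T. orthonormal_eigenvectors M T \<longrightarrow> card T \<le> card S)"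
    by (rule ex_has_greatest_nat)
  then obtain S where S: "orthonormal_eigenvectors M S"
    and S_max: "\<And>T. orthonormal_eigenvectors M T \<Longrightarrow> card T \<le> card S" by blast
  have "finite S" using orthonormal_eigenvectors_independent[OF S] independent_bound by blast
  have S_eigen: "\<exists>c. M *v u = c *\<^sub>R u" and S_norm: "norm u = 1" if "u \<in> S" for u
    using S that unfolding orthonormal_eigenvectors_def by auto
  have "span S = UNIV"
  proof (rule ccontr)
    assume "span S \<noteq> UNIV"
    then obtain u where "u \<notin> S" "orthonormal_eigenvectors M (insert u S)"
      using orthonormal_eigenvectors_extend[OF sym S] by blast
    then show False using S_max[of "insert u S"] \<open>finite S\<close> by simp
  qed
  moreover have "M *v u = quad_form M u *\<^sub>R u" if u: "u \<in> S" for u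
  proof -
    obtain c where "M *v u = c *\<^sub>R u" using S_eigen[OF u] by blast
    then show ?thesis using S_norm[OF u] by (simp add: dot_square_norm)
  qed
  ultimately have "orthonormal_eigenbasis S M (quad_form M)"
    using S S_norm unfolding orthonormal_eigenvectors_def by unfold_locales blast+
  then show ?thesis by (rule that)
qed

context
  fixes M :: "real^'n^'n"
  assumes sym: "sym_mat M"
begin

lemma sym_mat_lambda_min_le_eigenvalue: "mat_eigenvalue M c \<Longrightarrow> lambda_min M \<le> c"
  using sym_mat_spectral[OF sym] orthonormal_eigenbasis.lambda_min_le_eigenvalue by metis

lemma sym_mat_eigenvalue_le_lambda_max: "mat_eigenvalue M c \<Longrightarrow> c \<le> lambda_max M"
  using sym_mat_spectral[OF sym] orthonormal_eigenbasis.eigenvalue_le_lambda_max by metis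

lemma sym_mat_eigenvalue_lambda_min: "mat_eigenvalue M (lambda_min M)"
  using sym_mat_spectral[OF sym] orthonormal_eigenbasis.mat_eigenvalue_lambda_min by metis

lemma sym_mat_eigenvalue_lambda_max: "mat_eigenvalue M (lambda_max M)"
  using sym_mat_spectral[OF sym] orthonormal_eigenbasis.mat_eigenvalue_lambda_max by metis

lemma sym_mat_lambda_min_le_quad_form: "lambda_min M * (x \<bullet> x) \<le> quad_form M x"
  using sym_mat_spectral[OF sym] orthonormal_eigenbasis.lambda_min_le_quad_form by metis

lemma sym_mat_quad_form_le_lambda_max: "quad_form M x \<le> lambda_max M * (x \<bullet> x)"
  using sym_mat_spectral[OF sym] orthonormal_eigenbasis.quad_form_le_lambda_max by metis

lemma sym_mat_quad_form_matrix_inv_le: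
  assumes "\<And>c. mat_eigenvalue M c \<Longrightarrow> c \<noteq> 0" and "\<And>c. mat_eigenvalue M c \<Longrightarrow> inverse c \<le> b"
  shows "quad_form (matrix_inv M) y \<le> b * (y \<bullet> y)"
proof -
  obtain S where "orthonormal_eigenbasis S M (quad_form M)" using sym_mat_spectral[OF sym] .
  then interpret orthonormal_eigenbasis S M "quad_form M" .
  show ?thesis using assms by (intro quad_form_matrix_inv_le) (auto simp: mat_eigenvalue_iff)
qed

end

lemma mat_eigenvalue_quad_form:
  assumes "mat_eigenvalue M c"
  obtains v where "v \<noteq> 0" "quad_form M v = c * (v \<bullet> v)"
  using assms unfolding mat_eigenvalue_def by auto

lemma mat_eigenvalue_pos: "(\<And>z. z \<noteq> 0 \<Longrightarrow> 0 < quad_form M z) \<Longrightarrow> mat_eigenvalue M c \<Longrightarrow> 0 < c"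
  by (metis mat_eigenvalue_quad_form inner_gt_zero_iff zero_less_mult_pos2)

lemma mat_eigenvalue_neg: "(\<And>z. z \<noteq> 0 \<Longrightarrow> quad_form M z < 0) \<Longrightarrow> mat_eigenvalue M c \<Longrightarrow> c < 0"
  by (metis mat_eigenvalue_quad_form inner_gt_zero_iff mult_less_0_iff not_less_iff_gr_or_eq)

lemma mat_eigenvalue_nonneg: "(\<And>z. 0 \<le> quad_form M z) \<Longrightarrow> mat_eigenvalue M c \<Longrightarrow> 0 \<le> c"
  by (metis mat_eigenvalue_quad_form inner_gt_zero_iff zero_le_mult_iff not_less)

lemma mat_eigenvalue_scaleR_id_diff:
  "mat_eigenvalue (c *\<^sub>R mat 1 - A) d \<longleftrightarrow> mat_eigenvalue A (c - d)"
  unfolding mat_eigenvalue_def scaleR_id_diff_matrix_vector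
  by (metis (no_types, opaque_lifting) scaleR_left_diff_distrib eq_diff_eq diff_diff_eq2 add_diff_cancel_left')

lemma pos_semidef_mat_lambda_min_nonneg: "pos_semidef_mat M \<Longrightarrow> 0 \<le> lambda_min M"
  unfolding pos_semidef_mat_def using sym_mat_eigenvalue_lambda_min mat_eigenvalue_nonneg by blast

lemma pos_semidef_mat_lambda_max_nonneg: "pos_semidef_mat M \<Longrightarrow> 0 \<le> lambda_max M"
  unfolding pos_semidef_mat_def using sym_mat_eigenvalue_lambda_max mat_eigenvalue_nonneg by blast

lemma pos_def_mat_lambda_max_pos: "pos_def_mat M \<Longrightarrow> 0 < lambda_max M"
  unfolding pos_def_mat_def using sym_mat_eigenvalue_lambda_max mat_eigenvalue_pos by blast

lemma sym_mat_quad_form_resolvent_le: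
  fixes A :: "real^'n^'n"
  assumes A: "sym_mat A" and \<zeta>: "\<zeta> < lambda_min A \<or> lambda_max A < \<zeta>"
  shows "quad_form (matrix_inv (\<zeta> *\<^sub>R mat 1 - A)) y \<le> inverse (\<zeta> - lambda_max A) * (y \<bullet> y)"
proof (rule sym_mat_quad_form_matrix_inv_le[OF sym_mat_scaleR_id_diff[OF A]])
  fix d assume "mat_eigenvalue (\<zeta> *\<^sub>R mat 1 - A) d"
  then have "mat_eigenvalue A (\<zeta> - d)" by (simp add: mat_eigenvalue_scaleR_id_diff)
  then have d: "lambda_min A \<le> \<zeta> - d" "\<zeta> - d \<le> lambda_max A"
    by (rule sym_mat_lambda_min_le_eigenvalue[OF A], rule sym_mat_eigenvalue_le_lambda_max[OF A])
  from \<zeta> show "d \<noteq> 0" using d by linarith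
  from \<zeta> show "inverse d \<le> inverse (\<zeta> - lambda_max A)"
  proof
    assume "\<zeta> < lambda_min A"
    then show ?thesis using d by (intro le_imp_inverse_le_neg) linarith+
  next
    assume "lambda_max A < \<zeta>"
    then show ?thesis using d by (intro le_imp_inverse_le) linarith+
  qed
qed

section \<open>Square roots and similarity\<close>

lemma pos_def_mat_sqrt_eigenvector:
  assumes Y: "pos_def_mat Y" "Y ** Y = M" and u: "M *v u = c\<^sup>2 *\<^sub>R u" and c: "0 \<le> c"
  shows "Y *v u = c *\<^sub>R u"
proof -
  define v where "v = Y *v u - c *\<^sub>R u"
  have "Y *v v + c *\<^sub>R v = (Y ** Y) *v u - c\<^sup>2 *\<^sub>R u"
    by (simp add: v_def matrix_vector_mult_diff_distrib matrix_vector_mult_scaleR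
        matrix_vector_mul_assoc[symmetric] power2_eq_square algebra_simps)
  then have "Y *v v = - c *\<^sub>R v" using Y(2) u by (simp add: eq_neg_iff_add_eq_0)
  then have "\<not> 0 < quad_form Y v" using c by (simp add: not_less)
  then have "v = 0" using Y(1) unfolding pos_def_mat_def by blast
  then show ?thesis by (simp add: v_def)
qed

context orthonormal_eigenbasis
begin

lemma
  assumes pos: "\<And>u. u \<in> S \<Longrightarrow> 0 < \<mu> u"
  shows pos_def_mat_spd_sqrt: "pos_def_mat (spd_sqrt M)"
    and spd_sqrt_square: "spd_sqrt M ** spd_sqrt M = M"
proof -
  define X where "X = matrix (spectral_map (\<lambda>u. sqrt (\<mu> u)))"
  have X_pd: "pos_def_mat X" using pos by (simp add: X_def pos_def_mat_matrix_spectral_map)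
  have "spectral_map (\<lambda>u. sqrt (\<mu> u) * sqrt (\<mu> u)) x = spectral_map \<mu> x" for x
    by (rule spectral_map_cong) (simp add: pos less_imp_le)
  then have X_sq: "X ** X = M"
    unfolding matrix_eq
    by (simp add: X_def matrix_vector_mul_assoc[symmetric] matrix_spectral_map
        spectral_map_spectral_map matrix_vector_eq_spectral_map)
  have uniq: "Y = X" if Y: "pos_def_mat Y" "Y ** Y = M" for Y
  proof -
    have "Y *v u = sqrt (\<mu> u) *\<^sub>R u" if u: "u \<in> S" for u
      by (rule pos_def_mat_sqrt_eigenvector[OF Y]) (simp_all add: eigenvector u pos less_imp_le)
    then interpret Y: orthonormal_eigenbasis S Y "\<lambda>u. sqrt (\<mu> u)" by unfold_locales
    show ?thesis
      unfolding matrix_eq by (simp add: Y.matrix_vector_eq_spectral_map X_def matrix_spectral_map)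
  qed
  have "spd_sqrt M = X"
    unfolding spd_sqrt_def by (rule the_equality) (use X_pd X_sq uniq in blast)+
  then show "pos_def_mat (spd_sqrt M)" "spd_sqrt M ** spd_sqrt M = M" using X_pd X_sq by simp_all
qed

end

lemma
  assumes pd: "pos_def_mat M"
  shows pos_def_mat_spd_sqrt: "pos_def_mat (spd_sqrt M)"
    and spd_sqrt_square: "spd_sqrt M ** spd_sqrt M = M"
proof -
  obtain S where "orthonormal_eigenbasis S M (quad_form M)"
    using sym_mat_spectral pd unfolding pos_def_mat_def by blast
  then interpret orthonormal_eigenbasis S M "quad_form M" .
  have "0 < quad_form M u" if "u \<in> S" for u
  proof -
    have "u \<noteq> 0" using norm_eq_1[OF that] by auto
    then show ?thesis using pd unfolding pos_def_mat_def by blast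
  qed
  then show "pos_def_mat (spd_sqrt M)" "spd_sqrt M ** spd_sqrt M = M" using pos_def_mat_spd_sqrt spd_sqrt_square by blast+
qed

lemma
  assumes "pos_def_mat M"
  shows sym_mat_inv_sqrt: "sym_mat (inv_sqrt M)"
    and invertible_inv_sqrt: "invertible (inv_sqrt M)"
    and inv_sqrt_square: "inv_sqrt M ** inv_sqrt M = matrix_inv M"
proof -
  have X: "invertible (spd_sqrt M)" "sym_mat (spd_sqrt M)"
    using pos_def_mat_spd_sqrt[OF assms] pos_def_mat_invertible pos_def_mat_def by blast+
  show "sym_mat (inv_sqrt M)" unfolding inv_sqrt_def using sym_mat_matrix_inv X by blast
  show "invertible (inv_sqrt M)" unfolding inv_sqrt_def using invertible_matrix_inv X by blast
  show "inv_sqrt M ** inv_sqrt M = matrix_inv M"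
    unfolding inv_sqrt_def using matrix_inv_mult[OF X(1) X(1)] spd_sqrt_square[OF assms] by simp
qed

lemma mat_eigenvalue_similar:
  fixes P M :: "real^'n^'n"
  assumes "invertible P"
  shows "mat_eigenvalue (P ** M ** matrix_inv P) c \<longleftrightarrow> mat_eigenvalue M c"
proof -
  have conj: "mat_eigenvalue (P ** M ** Q) c"
    if QP: "Q ** P = mat 1" and eig: "mat_eigenvalue M c" for P Q M :: "real^'n^'n"
  proof -
    obtain v where v: "v \<noteq> 0" "M *v v = c *\<^sub>R v" using eig unfolding mat_eigenvalue_def by blast
    have QPv: "Q *v (P *v v) = v" using QP by (simp add: matrix_vector_mul_assoc)
    then have "P *v v \<noteq> 0" using v(1) by auto
    moreover have "(P ** M ** Q) *v (P *v v) = c *\<^sub>R (P *v v)"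
      by (simp add: matrix_vector_mul_assoc[symmetric] QPv v(2) matrix_vector_mult_scaleR)
    ultimately show ?thesis unfolding mat_eigenvalue_def by blast
  qed
  have "matrix_inv P ** (P ** M ** matrix_inv P) ** P
      = (matrix_inv P ** P) ** M ** (matrix_inv P ** P)"
    by (simp only: matrix_mul_assoc)
  then have undo: "matrix_inv P ** (P ** M ** matrix_inv P) ** P = M"
    by (simp add: matrix_inv_left[OF assms])
  show ?thesis
  proof
    assume "mat_eigenvalue (P ** M ** matrix_inv P) c"
    from conj[OF matrix_inv_right[OF assms] this] show "mat_eigenvalue M c" by (simp only: undo)
  next
    assume "mat_eigenvalue M c"
    then show "mat_eigenvalue (P ** M ** matrix_inv P) c" by (rule conj[OF matrix_inv_left[OF assms]])
  qed
qed

lemma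
  fixes P M :: "real^'n^'n"
  assumes "pos_def_mat P"
  shows lambda_min_preconditioned: "lambda_min (matrix_inv P ** M) = lambda_min (inv_sqrt P ** M ** inv_sqrt P)"
    and lambda_max_preconditioned: "lambda_max (matrix_inv P ** M) = lambda_max (inv_sqrt P ** M ** inv_sqrt P)"
proof -
  define K where "K = inv_sqrt P"
  have K: "invertible K" "K ** K = matrix_inv P"
    using assms unfolding K_def by (simp_all add: invertible_inv_sqrt inv_sqrt_square)
  have "K ** (K ** M ** K) ** matrix_inv K = K ** K ** M ** (K ** matrix_inv K)"
    by (simp only: matrix_mul_assoc)
  then have "matrix_inv P ** M = K ** (K ** M ** K) ** matrix_inv K"
    by (simp add: K matrix_inv_right)
  then have "{c. mat_eigenvalue (matrix_inv P ** M) c} = {c. mat_eigenvalue (K ** M ** K) c}"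
    using mat_eigenvalue_similar[OF K(1)] by simp
  then show "lambda_min (matrix_inv P ** M) = lambda_min (inv_sqrt P ** M ** inv_sqrt P)"
    and "lambda_max (matrix_inv P ** M) = lambda_max (inv_sqrt P ** M ** inv_sqrt P)"
    by (simp_all add: lambda_min_def lambda_max_def K_def)
qed

section \<open>Definiteness of Z\<close>

text \<open>The paper's Z(\<zeta>) is \<open>Z_matrix Abar R Dbar \<zeta>\<close>.\<close>

definition Z_matrix :: "real^'n^'n \<Rightarrow> real^'n^'m \<Rightarrow> real^'m^'m \<Rightarrow> real \<Rightarrow> real^'m^'m" where
  "Z_matrix A R D \<zeta> = (1 - \<zeta>) *\<^sub>R (R ** matrix_inv (\<zeta> *\<^sub>R mat 1 - A) ** transpose R) - D + \<zeta> *\<^sub>R mat 1"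

lemma quad_form_Z_matrix:
  "quad_form (Z_matrix A R D \<zeta>) z
    = (1 - \<zeta>) * quad_form (matrix_inv (\<zeta> *\<^sub>R mat 1 - A)) (transpose R *v z) - quad_form D z + \<zeta> * (z \<bullet> z)"
proof -
  have "z \<bullet> ((R ** matrix_inv (\<zeta> *\<^sub>R mat 1 - A) ** transpose R) *v z)
      = quad_form (matrix_inv (\<zeta> *\<^sub>R mat 1 - A)) (transpose R *v z)"
    by (simp only: matrix_vector_mul_assoc[symmetric] inner_matrix_vector_transpose)
  then show ?thesis
    by (simp add: Z_matrix_def matrix_vector_mult_diff_rdistrib matrix_vector_mult_add_rdistrib
        scaleR_matrix_vector_assoc[symmetric] inner_diff_right inner_add_right)
qed

lemma Z_matrix_neg_definite:
  fixes A :: "real^'n^'n" and R :: "real^'n^'m" and D :: "real^'m^'m"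
  assumes A: "sym_mat A" and D: "pos_semidef_mat D"
    and A_min: "lambda_min A \<le> 1" and A_max: "1 \<le> lambda_max A"
    and \<zeta>: "0 < \<zeta>" "\<zeta> < lambda_min A"
      "\<zeta> < lambda_min (R ** transpose R) / (lambda_max A + lambda_min (R ** transpose R) + lambda_max D)"
    and z: "z \<noteq> 0"
  shows "quad_form (Z_matrix A R D \<zeta>) z < 0"
proof -
  define gR where "gR = lambda_min (R ** transpose R)"
  define c where "c = lambda_max A - \<zeta>"
  define y where "y = transpose R *v z"
  have c: "0 < c" using \<zeta>(2) A_min A_max unfolding c_def by linarith
  have \<zeta>1: "\<zeta> < 1" using \<zeta>(2) A_min by linarith
  have gR: "0 \<le> gR"
    unfolding gR_def by (rule pos_semidef_mat_lambda_min_nonneg[OF pos_semidef_mat_mult_transpose])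
  have gD: "0 \<le> lambda_max D" by (rule pos_semidef_mat_lambda_max_nonneg[OF D])
  have "\<zeta> * (lambda_max A + gR + lambda_max D) < gR"
    using \<zeta>(3) A_max gR gD unfolding gR_def[symmetric] by (simp add: pos_less_divide_eq)
  then have "\<zeta> * lambda_max A + \<zeta> * gR + \<zeta> * lambda_max D < gR" by (simp add: algebra_simps)
  moreover have "0 \<le> \<zeta> * lambda_max D" "0 < \<zeta> * \<zeta>" using \<zeta>(1) gD by simp_all
  ultimately have key: "\<zeta> * c < (1 - \<zeta>) * gR"
    unfolding c_def right_diff_distrib left_diff_distrib by linarith
  have "inverse (\<zeta> - lambda_max A) = - inverse c" unfolding c_def by (metis inverse_minus_eq minus_diff_eq)
  then have T: "quad_form (matrix_inv (\<zeta> *\<^sub>R mat 1 - A)) y \<le> - inverse c * (y \<bullet> y)"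
    using sym_mat_quad_form_resolvent_le[OF A] \<zeta>(2) by metis
  have R: "gR * (z \<bullet> z) \<le> y \<bullet> y"
    using sym_mat_lambda_min_le_quad_form[OF sym_mat_mult_transpose, of R z]
    unfolding gR_def y_def quad_form_mult_transpose .
  have "(1 - \<zeta>) * quad_form (matrix_inv (\<zeta> *\<^sub>R mat 1 - A)) y \<le> (1 - \<zeta>) * (- inverse c * (y \<bullet> y))"
    using T \<zeta>1 by (intro mult_left_mono) simp_all
  moreover have "0 \<le> quad_form D z" using D unfolding pos_semidef_mat_def by blast
  ultimately have "quad_form (Z_matrix A R D \<zeta>) z \<le> (1 - \<zeta>) * (- inverse c * (y \<bullet> y)) + \<zeta> * (z \<bullet> z)"
    unfolding quad_form_Z_matrix y_def by linarith
  also have "\<dots> \<le> (1 - \<zeta>) * (- inverse c * (gR * (z \<bullet> z))) + \<zeta> * (z \<bullet> z)"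
    using R c \<zeta>1 by (simp add: mult_left_mono)
  also have "\<dots> = (\<zeta> * c - (1 - \<zeta>) * gR) * (z \<bullet> z) / c"
    using c by (simp add: field_simps)
  also have "\<dots> < 0"
    using key c z by (simp add: divide_neg_pos mult_neg_pos)
  finally show ?thesis .
qed

lemma Z_matrix_pos_definite:
  fixes A :: "real^'n^'n" and R :: "real^'n^'m" and D :: "real^'m^'m"
  assumes A: "sym_mat A" and D: "pos_semidef_mat D" and R: "inj ((*v) (transpose R))"
    and A_max: "1 \<le> lambda_max A"
    and \<zeta>: "lambda_max A + lambda_max (D + R ** transpose R) \<le> \<zeta>"
    and z: "z \<noteq> 0"
  shows "0 < quad_form (Z_matrix A R D \<zeta>) z"
proof -
  define gS where "gS = lambda_max (D + R ** transpose R)"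
  define a where "a = \<zeta> - lambda_max A"
  define k where "k = (\<zeta> - 1) / a"
  define y where "y = transpose R *v z"
  have S: "pos_def_mat (D + R ** transpose R)" by (rule pos_def_mat_add_mult_transpose[OF D R])
  have gS: "0 < gS" unfolding gS_def by (rule pos_def_mat_lambda_max_pos[OF S])
  have a: "gS \<le> a" "0 < a" using \<zeta> gS unfolding a_def gS_def by linarith+
  have \<zeta>1: "1 \<le> \<zeta>" using \<zeta> A_max gS unfolding gS_def by linarith
  have k: "1 \<le> k" using a A_max unfolding k_def a_def by (simp add: le_divide_eq)
  have D_nonneg: "0 \<le> quad_form D z" using D unfolding pos_semidef_mat_def by blast
  have T: "quad_form (matrix_inv (\<zeta> *\<^sub>R mat 1 - A)) y \<le> inverse a * (y \<bullet> y)"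
    using sym_mat_quad_form_resolvent_le[OF A] a(2) unfolding a_def by simp
  have "(\<zeta> - 1) * quad_form (matrix_inv (\<zeta> *\<^sub>R mat 1 - A)) y \<le> k * (y \<bullet> y)"
    using mult_left_mono[OF T, of "\<zeta> - 1"] \<zeta>1 unfolding k_def by (simp add: divide_inverse mult_ac)
  moreover have "quad_form D z + k * (y \<bullet> y) \<le> k * (gS * (z \<bullet> z))"
  proof -
    have "quad_form D z \<le> k * quad_form D z" using mult_right_mono[OF k D_nonneg] by simp
    then have "quad_form D z + k * (y \<bullet> y) \<le> k * quad_form (D + R ** transpose R) z"
      unfolding quad_form_add quad_form_mult_transpose y_def by (simp add: distrib_left)
    also have "\<dots> \<le> k * (gS * (z \<bullet> z))"
      using sym_mat_quad_form_le_lambda_max[OF S[unfolded pos_def_mat_def, THEN conjunct1]] k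
      unfolding gS_def by (simp add: mult_left_mono)
    finally show ?thesis .
  qed
  moreover have "k * gS < \<zeta>"
  proof -
    have "(\<zeta> - 1) * gS < \<zeta> * gS" using gS by simp
    also have "\<dots> \<le> \<zeta> * a" using a \<zeta>1 by (simp add: mult_left_mono)
    finally show ?thesis using a unfolding k_def by (simp add: divide_less_eq)
  qed
  then have "k * gS * (z \<bullet> z) < \<zeta> * (z \<bullet> z)" using z by simp
  ultimately show ?thesis
    unfolding quad_form_Z_matrix y_def[symmetric] by (simp add: algebra_simps)
qed

lemma Z_matrix_eigenvalues_same_sign:
  fixes A :: "real^'n^'n" and R :: "real^'n^'m" and D :: "real^'m^'m"
  assumes A: "sym_mat A" and D: "pos_semidef_mat D" and R: "inj ((*v) (transpose R))"
    and A_min: "lambda_min A \<le> 1" and A_max: "1 \<le> lambda_max A"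
    and \<zeta>: "(0 < \<zeta> \<and> \<zeta> < lambda_min A
            \<and> \<zeta> < lambda_min (R ** transpose R) / (lambda_max A + lambda_min (R ** transpose R) + lambda_max D))
          \<or> lambda_max A + lambda_max (D + R ** transpose R) \<le> \<zeta>"
  shows "(\<forall>c. mat_eigenvalue (Z_matrix A R D \<zeta>) c \<longrightarrow> c > 0)
       \<or> (\<forall>c. mat_eigenvalue (Z_matrix A R D \<zeta>) c \<longrightarrow> c < 0)"
  using \<zeta>
proof
  assume "0 < \<zeta> \<and> \<zeta> < lambda_min A
    \<and> \<zeta> < lambda_min (R ** transpose R) / (lambda_max A + lambda_min (R ** transpose R) + lambda_max D)"
  then have "\<forall>c. mat_eigenvalue (Z_matrix A R D \<zeta>) c \<longrightarrow> c < 0"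
    using mat_eigenvalue_neg Z_matrix_neg_definite[OF A D A_min A_max] by blast
  then show ?thesis ..
next
  assume "lambda_max A + lambda_max (D + R ** transpose R) \<le> \<zeta>"
  then have "\<forall>c. mat_eigenvalue (Z_matrix A R D \<zeta>) c \<longrightarrow> c > 0"
    using mat_eigenvalue_pos Z_matrix_pos_definite[OF A D R A_max] by blast
  then show ?thesis ..
qed

theorem lemma3:
  fixes A Ahat :: "real^'n^'n" and B :: "real^'n^'m" and D Shat :: "real^'m^'m"
    and \<zeta> :: real
  assumes "CARD('m) \<le> CARD('n)"
    and "pos_def_mat A"
    and "rank B = CARD('m)"
    and "pos_semidef_mat D"
    and "pos_def_mat Ahat" and "pos_def_mat Shat"
    and "1 \<ge> lambda_min (matrix_inv Ahat ** A)"
    and "1 \<le> lambda_max (matrix_inv Ahat ** A)"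
    and "(0 < \<zeta> \<and> \<zeta> < lambda_min (matrix_inv Ahat ** A)
          \<and> \<zeta> < lambda_min ((inv_sqrt Shat ** B ** inv_sqrt Ahat) ** transpose (inv_sqrt Shat ** B ** inv_sqrt Ahat))
             / (lambda_max (matrix_inv Ahat ** A)
                + lambda_min ((inv_sqrt Shat ** B ** inv_sqrt Ahat) ** transpose (inv_sqrt Shat ** B ** inv_sqrt Ahat))
                + lambda_max (matrix_inv Shat ** D)))
        \<or> \<zeta> \<ge> lambda_max (matrix_inv Ahat ** A)
               + lambda_max (matrix_inv Shat ** (D + B ** matrix_inv Ahat ** transpose B))"
  shows "(\<forall>c. mat_eigenvalue
              ((1 - \<zeta>) *\<^sub>R ((inv_sqrt Shat ** B ** inv_sqrt Ahat)
                 ** matrix_inv (\<zeta> *\<^sub>R mat 1 - inv_sqrt Ahat ** A ** inv_sqrt Ahat)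
                 ** transpose (inv_sqrt Shat ** B ** inv_sqrt Ahat))
               - inv_sqrt Shat ** D ** inv_sqrt Shat + \<zeta> *\<^sub>R mat 1) c \<longrightarrow> c > 0)
       \<or> (\<forall>c. mat_eigenvalue
              ((1 - \<zeta>) *\<^sub>R ((inv_sqrt Shat ** B ** inv_sqrt Ahat)
                 ** matrix_inv (\<zeta> *\<^sub>R mat 1 - inv_sqrt Ahat ** A ** inv_sqrt Ahat)
                 ** transpose (inv_sqrt Shat ** B ** inv_sqrt Ahat))
               - inv_sqrt Shat ** D ** inv_sqrt Shat + \<zeta> *\<^sub>R mat 1) c \<longrightarrow> c < 0)"
  proof -
  define K where "K = inv_sqrt Ahat"
  define L where "L = inv_sqrt Shat"
  define R where "R = L ** B ** K"
  have K: "sym_mat K" "invertible K" "K ** K = matrix_inv Ahat"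
    using assms(5) unfolding K_def by (simp_all add: sym_mat_inv_sqrt invertible_inv_sqrt inv_sqrt_square)
  have L: "sym_mat L" "invertible L"
    using assms(6) unfolding L_def by (simp_all add: sym_mat_inv_sqrt invertible_inv_sqrt)
  have R_transpose: "transpose R = K ** transpose B ** L"
    using K(1) L(1) unfolding R_def sym_mat_def by (simp add: matrix_transpose_mul matrix_mul_assoc)
  have A: "sym_mat (K ** A ** K)"
    using assms(2) K(1) sym_mat_congruence unfolding pos_def_mat_def by blast
  have D: "pos_semidef_mat (L ** D ** L)" by (rule pos_semidef_mat_congruence[OF L(1) assms(4)])
  have "inj ((*v) (transpose B))" using assms(3) full_rank_injective rank_transpose by metis
  then have R: "inj ((*v) (transpose R))"
    using inj_matrix_vector_mult[OF K(2)] inj_matrix_vector_mult[OF L(2)]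
    unfolding R_transpose matrix_vector_mul_assoc[symmetric] by (simp add: inj_def)
  have S: "L ** (D + B ** matrix_inv Ahat ** transpose B) ** L = L ** D ** L + R ** transpose R"
    unfolding R_transpose unfolding R_def K(3)[symmetric]
    by (simp add: matrix_add_ldistrib matrix_add_rdistrib matrix_mul_assoc)
  have "lambda_min (K ** A ** K) \<le> 1" "1 \<le> lambda_max (K ** A ** K)"
    "(0 < \<zeta> \<and> \<zeta> < lambda_min (K ** A ** K)
        \<and> \<zeta> < lambda_min (R ** transpose R)
             / (lambda_max (K ** A ** K) + lambda_min (R ** transpose R) + lambda_max (L ** D ** L)))
      \<or> lambda_max (K ** A ** K) + lambda_max (L ** D ** L + R ** transpose R) \<le> \<zeta>"
    using assms(7-9)
    unfolding lambda_min_preconditioned[OF assms(5)] lambda_max_preconditioned[OF assms(5)]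
      lambda_max_preconditioned[OF assms(6)] K_def[symmetric] L_def[symmetric] R_def[symmetric] S
    by simp_all
  from Z_matrix_eigenvalues_same_sign[OF A D R this] show ?thesis
    unfolding Z_matrix_def R_def K_def L_def .
qed

end
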